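(* Let $G$ be a simple graph with $n$ vertices and $m$ edges, and let $\hat{G}$ be a $1$-regular conflict graph on $E(G)$. If $m<2n$, then there exists a vertex $v$ of $G$ such that $\partial_G v$ is conflict-free, i.e. independent in $\hat{G}$.
   Context: A conflict graph on $E(G)$ is a graph $\hat{G}$ with $V(\hat{G})=E(G)$; two edges are conflicting if they are adjacent in $\hat{G}$, and a set of edges is conflict-free if it is independent in $\hat{G}$. For a vertex $v$, $\partial_G v$ denotes the set of edges of $G$ incident with $v$. *)

theory Defs
  imports Main
begin

definition simple_graph :: "'a set \<Rightarrow> 'a set set \<Rightarrow> bool" where
  "simple_graph V E \<longleftrightarrow> finite V \<and> (\<forall>e\<in>E. e \<subseteq> V \<and> card e = 2)"

definition incident_edges :: "'a set set \<Rightarrow> 'a \<Rightarrow> 'a set set" where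
  "incident_edges E v = {e \<in> E. v \<in> e}"

definition conflict_graph :: "'a set set \<Rightarrow> ('a set \<Rightarrow> 'a set \<Rightarrow> bool) \<Rightarrow> bool" where
  "conflict_graph E C \<longleftrightarrow>
     (\<forall>e f. C e f \<longrightarrow> e \<in> E \<and> f \<in> E) \<and>
     (\<forall>e f. C e f \<longrightarrow> C f e) \<and>
     (\<forall>e. \<not> C e e)"

definition regular_conflict_graph :: "nat \<Rightarrow> 'a set set \<Rightarrow> ('a set \<Rightarrow> 'a set \<Rightarrow> bool) \<Rightarrow> bool" where
  "regular_conflict_graph k E C \<longleftrightarrow>
     conflict_graph E C \<and> (\<forall>e\<in>E. card {f \<in> E. C e f} = k)"

definition conflict_free :: "('a set \<Rightarrow> 'a set \<Rightarrow> bool) \<Rightarrow> 'a set set \<Rightarrow> bool" where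
  "conflict_free C F \<longleftrightarrow> (\<forall>e\<in>F. \<forall>f\<in>F. \<not> C e f)"

end

theory Submission
  imports Defs
begin

text \<open>A 1-regular conflict graph is a perfect matching of the edges of \<open>G\<close>, so \<open>E(G)\<close> splits
  into \<open>m/2\<close> conflicting pairs. Two distinct edges of a simple graph share at most one vertex,
  so every conflicting pair lies in \<open>\<partial>v\<close> for at most one vertex \<open>v\<close>. If no \<open>\<partial>v\<close> were
  conflict-free, every vertex would be covered by some pair, whence \<open>n \<le> m/2\<close>, contradicting
  \<open>m < 2n\<close>.\<close>

lemma simple_graph_finite_edges:
  assumes "simple_graph V E"
  shows "finite E"
  using assms unfolding simple_graph_def by (meson Pow_iff finite_Pow_iff finite_subset subsetI)

lemma conflict_graph_in_edges:
  assumes "conflict_graph E C" and "C e f"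
  shows "e \<in> E" and "f \<in> E"
  using assms unfolding conflict_graph_def by metis+

lemma conflict_graph_sym:
  assumes "conflict_graph E C" and "C e f"
  shows "C f e"
  using assms unfolding conflict_graph_def by metis

lemma conflict_graph_neq:
  assumes "conflict_graph E C" and "C e f"
  shows "e \<noteq> f"
  using assms unfolding conflict_graph_def by metis

lemma regular_conflict_graph_conflict_graph:
  "regular_conflict_graph k E C \<Longrightarrow> conflict_graph E C"
  unfolding regular_conflict_graph_def by simp

lemma regular_conflict_graph_1_partner:
  assumes "regular_conflict_graph 1 E C" and "e \<in> E"
  obtains f where "{g \<in> E. C e g} = {f}"
proof -
  have "card {g \<in> E. C e g} = 1"
    using assms unfolding regular_conflict_graph_def by simp
  then show thesis
    using that by (metis card_1_singletonE)
qed

lemma regular_conflict_graph_1_ex: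
  assumes "regular_conflict_graph 1 E C" and "e \<in> E"
  shows "\<exists>f. C e f"
proof -
  obtain f where "{g \<in> E. C e g} = {f}"
    using regular_conflict_graph_1_partner[OF assms] .
  then have "f \<in> {g \<in> E. C e g}"
    by simp
  then show ?thesis
    by blast
qed

lemma regular_conflict_graph_1_unique:
  assumes "regular_conflict_graph 1 E C" and "C e f" and "C e g"
  shows "f = g"
proof -
  note cg = regular_conflict_graph_conflict_graph[OF assms(1)]
  obtain h where h: "{g \<in> E. C e g} = {h}"
    using regular_conflict_graph_1_partner[OF assms(1) conflict_graph_in_edges(1)[OF cg assms(2)]] .
  have "f \<in> {g \<in> E. C e g}" "g \<in> {g \<in> E. C e g}"
    using assms(2,3) conflict_graph_in_edges(2)[OF cg] by simp_all
  then show ?thesis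
    unfolding h by simp
qed

definition conflict_pairs :: "('a set \<Rightarrow> 'a set \<Rightarrow> bool) \<Rightarrow> 'a set set set" where
  "conflict_pairs C = {{e, f} | e f. C e f}"

lemma conflict_pair_eq:
  assumes "regular_conflict_graph 1 E C" and "p \<in> conflict_pairs C" and "e \<in> p" and "C e f"
  shows "p = {e, f}"
proof -
  obtain e' f' where p: "p = {e', f'}" and "C e' f'"
    using assms(2) unfolding conflict_pairs_def by blast
  moreover have "C f' e'"
    using regular_conflict_graph_conflict_graph[OF assms(1)] \<open>C e' f'\<close> by (rule conflict_graph_sym)
  ultimately show ?thesis
    using assms(3,4) regular_conflict_graph_1_unique[OF assms(1)] by blast
qed

lemma card_conflict_pair:
  assumes "conflict_graph E C" and "p \<in> conflict_pairs C"
  shows "card p = 2"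
proof -
  obtain e f where "p = {e, f}" and "C e f"
    using assms(2) unfolding conflict_pairs_def by blast
  then show ?thesis
    using conflict_graph_neq[OF assms(1)] by simp
qed

lemma Union_conflict_pairs:
  assumes "regular_conflict_graph 1 E C"
  shows "\<Union>(conflict_pairs C) = E"
proof (intro equalityI subsetI)
  fix e assume "e \<in> \<Union>(conflict_pairs C)"
  then obtain f g where "C f g" "e \<in> {f, g}"
    unfolding conflict_pairs_def by blast
  then show "e \<in> E"
    using conflict_graph_in_edges[OF regular_conflict_graph_conflict_graph[OF assms]] by blast
next
  fix e assume "e \<in> E"
  then obtain f where "C e f"
    using regular_conflict_graph_1_ex[OF assms] by blast
  then show "e \<in> \<Union>(conflict_pairs C)"
    unfolding conflict_pairs_def by blast
qed

lemma pairwise_disjnt_conflict_pairs: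
  assumes "regular_conflict_graph 1 E C"
  shows "pairwise disjnt (conflict_pairs C)"
proof (rule pairwiseI)
  fix p q assume pq: "p \<in> conflict_pairs C" "q \<in> conflict_pairs C" "p \<noteq> q"
  show "disjnt p q"
    unfolding disjnt_def
  proof (rule equals0I)
    fix e assume "e \<in> p \<inter> q"
    then have "e \<in> p" "e \<in> q" "e \<in> E"
      using pq(1) Union_conflict_pairs[OF assms] by auto
    then obtain f where "C e f"
      using regular_conflict_graph_1_ex[OF assms] by blast
    have "p = {e, f}"
      using conflict_pair_eq[OF assms pq(1) \<open>e \<in> p\<close> \<open>C e f\<close>] .
    moreover have "q = {e, f}"
      using conflict_pair_eq[OF assms pq(2) \<open>e \<in> q\<close> \<open>C e f\<close>] .
    ultimately show False
      using pq(3) by simp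
  qed
qed

lemma card_eq_twice_card_conflict_pairs:
  assumes "regular_conflict_graph 1 E C"
  shows "card E = 2 * card (conflict_pairs C)"
proof -
  have card2: "\<And>p. p \<in> conflict_pairs C \<Longrightarrow> card p = 2"
    using card_conflict_pair[OF regular_conflict_graph_conflict_graph[OF assms]] .
  then have "\<And>p. p \<in> conflict_pairs C \<Longrightarrow> finite p"
    by (intro card_ge_0_finite) simp
  then have "card (\<Union>(conflict_pairs C)) = (\<Sum>p\<in>conflict_pairs C. card p)"
    by (rule card_Union_disjoint[OF pairwise_disjnt_conflict_pairs[OF assms]])
  then show ?thesis
    using card2 Union_conflict_pairs[OF assms] by simp
qed

lemma card_Int_less_if_neq:
  assumes "finite A" and "finite B" and "card A = card B" and "A \<noteq> B"
  shows "card (A \<inter> B) < card A"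
proof (rule ccontr)
  assume "\<not> card (A \<inter> B) < card A"
  then have "card A \<le> card (A \<inter> B)" and "card B \<le> card (A \<inter> B)"
    using assms(3) by linarith+
  have "A \<inter> B = A"
    using card_seteq[OF assms(1) Int_lower1] \<open>card A \<le> card (A \<inter> B)\<close> .
  moreover have "A \<inter> B = B"
    using card_seteq[OF assms(2) Int_lower2] \<open>card B \<le> card (A \<inter> B)\<close> .
  ultimately show False
    using assms(4) by simp
qed

lemma card_Inter_conflict_pair:
  assumes "simple_graph V E" and "conflict_graph E C" and "p \<in> conflict_pairs C"
  shows "card (\<Inter>p) \<le> 1"
proof -
  obtain e f where p: "p = {e, f}" and "C e f"
    using assms(3) unfolding conflict_pairs_def by blast
  then have "e \<in> E" "f \<in> E" "e \<noteq> f"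
    using conflict_graph_in_edges[OF assms(2)] conflict_graph_neq[OF assms(2)] by simp_all
  then have "card e = 2" "card f = 2"
    using assms(1) unfolding simple_graph_def by simp_all
  moreover from this have "finite e" "finite f"
    by (intro card_ge_0_finite, simp)+
  ultimately have "card (e \<inter> f) < 2"
    using card_Int_less_if_neq[of e f] \<open>e \<noteq> f\<close> by simp
  then show ?thesis
    using p by simp
qed

lemma card_vertices_le_conflict_pairs:
  assumes "simple_graph V E" and "regular_conflict_graph 1 E C"
    and "\<forall>v\<in>V. \<not> conflict_free C (incident_edges E v)"
  shows "card V \<le> card (conflict_pairs C)"
proof -
  have "finite (\<Union>(conflict_pairs C))"
    using simple_graph_finite_edges[OF assms(1)] Union_conflict_pairs[OF assms(2)] by simp
  then have "finite (conflict_pairs C)"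
    by (rule finite_UnionD)
  have "V = (\<Union>p\<in>conflict_pairs C. \<Inter>p)"
  proof (intro equalityI subsetI)
    fix v assume "v \<in> V"
    then obtain e f where "C e f" "v \<in> e" "v \<in> f"
      using assms(3) unfolding conflict_free_def incident_edges_def by blast
    then show "v \<in> (\<Union>p\<in>conflict_pairs C. \<Inter>p)"
      unfolding conflict_pairs_def by blast
  next
    fix v assume "v \<in> (\<Union>p\<in>conflict_pairs C. \<Inter>p)"
    then obtain e f where "C e f" "v \<in> e"
      unfolding conflict_pairs_def by blast
    have "e \<in> E"
      using conflict_graph_in_edges(1)[OF regular_conflict_graph_conflict_graph[OF assms(2)] \<open>C e f\<close>] .
    then show "v \<in> V"
      using \<open>v \<in> e\<close> assms(1) unfolding simple_graph_def by blast
  qed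
  then have "card V \<le> (\<Sum>p\<in>conflict_pairs C. card (\<Inter>p))"
    using card_UN_le[OF \<open>finite (conflict_pairs C)\<close>] by simp
  also have "\<dots> \<le> (\<Sum>p\<in>conflict_pairs C. 1)"
    using card_Inter_conflict_pair[OF assms(1) regular_conflict_graph_conflict_graph[OF assms(2)]]
    by (rule sum_mono)
  finally show ?thesis
    by simp
qed

theorem proposition9:
  fixes V :: "'a set" and E :: "'a set set" and C :: "'a set \<Rightarrow> 'a set \<Rightarrow> bool"
  assumes "simple_graph V E"
    and "regular_conflict_graph 1 E C"
    and "card E < 2 * card V"
  shows "\<exists>v\<in>V. conflict_free C (incident_edges E v)"
proof (rule ccontr)
  assume "\<not> ?thesis"
  then have "card V \<le> card (conflict_pairs C)"
    using card_vertices_le_conflict_pairs assms(1,2) by blast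
  moreover have "card E = 2 * card (conflict_pairs C)"
    using card_eq_twice_card_conflict_pairs[OF assms(2)] .
  ultimately show False
    using assms(3) by linarith
qed

end
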